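(* Let $A,B$ be persistence diagrams with $A$ nonempty, let $d_0=\min\{d_\infty(A,B),d_\infty(D_0,B)\}$, $c_{\min}=\max\{0,(\mathrm{pers}(B)-d_0)/\mathrm{pers}(A)\}$, $c_{\max}=(\mathrm{pers}(B)+d_0)/\mathrm{pers}(A)$, let $N\ge1$, and let $t_i=c_{\min}+\tfrac{i}{N}(c_{\max}-c_{\min})$ for $i=0,\dots,N$. Set $\widehat{d_D}(A,B)=\min_{0\le i\le N}d_\infty(t_iA,B)$. Then $$0\le \widehat{d_D}(A,B)-\overline{d_D}(A,B)\le \frac{2d_0\,\mathrm{bd}(A)}{N\,\mathrm{pers}(A)}.$$
   Context: A persistence diagram is a finite multiset of points $a=(a_x,a_y)$ with $0\le a_x<a_y<\infty$ together with the diagonal $\Delta$ of infinite multiplicity; $D_0$ is the empty diagram. $d_\infty$ is the bottleneck distance. $cA=\{(ca_x,ca_y)\}$ for $c>0$ and $0A=D_0$. $\overline{d_D}(A,B)=\inf_{c\ge0}d_\infty(cA,B)$. $\mathrm{pers}(a)=(a_y-a_x)/2$, $\mathrm{pers}(A)=\max_{a\in A}\mathrm{pers}(a)$, and $\mathrm{bd}(A)=\max_{a\in A}\|a\|_\infty=\max_{a\in A}a_y$. *)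

theory Defs
  imports Complex_Main "HOL-Library.Multiset"
begin

text \<open>A persistence diagram: a finite multiset of off-diagonal points (the diagonal,
 of infinite multiplicity, is implicit via partial matchings).\<close>
type_synonym pdiag = "(real \<times> real) multiset"

definition is_pd :: "pdiag \<Rightarrow> bool" where
  "is_pd A \<longleftrightarrow> (\<forall>a\<in>#A. 0 \<le> fst a \<and> fst a < snd a)"

definition linf :: "real \<times> real \<Rightarrow> real \<times> real \<Rightarrow> real" where
  "linf a b = max \<bar>fst a - fst b\<bar> \<bar>snd a - snd b\<bar>"

text \<open>persistence of a point = its L-infinity distance to the diagonal\<close>
definition pers :: "real \<times> real \<Rightarrow> real" where
  "pers a = (snd a - fst a) / 2"

text \<open>A matching of A \<union> Delta with B \<union> Delta: a multiset of matched pairs;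
 all remaining points are matched to the diagonal.\<close>
definition is_matching :: "pdiag \<Rightarrow> pdiag \<Rightarrow> ((real \<times> real) \<times> (real \<times> real)) multiset \<Rightarrow> bool" where
  "is_matching A B M \<longleftrightarrow> image_mset fst M \<subseteq># A \<and> image_mset snd M \<subseteq># B"

definition match_cost :: "pdiag \<Rightarrow> pdiag \<Rightarrow> ((real \<times> real) \<times> (real \<times> real)) multiset \<Rightarrow> real" where
  "match_cost A B M = Max ({0} \<union> (\<lambda>(a,b). linf a b) ` set_mset M
      \<union> pers ` set_mset (A - image_mset fst M) \<union> pers ` set_mset (B - image_mset snd M))"

definition bottleneck :: "pdiag \<Rightarrow> pdiag \<Rightarrow> real" where
  "bottleneck A B = Inf (match_cost A B ` {M. is_matching A B M})"

definition scale_pd :: "real \<Rightarrow> pdiag \<Rightarrow> pdiag" where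
  "scale_pd c A = (if c = 0 then {#} else image_mset (\<lambda>(x,y). (c * x, c * y)) A)"

definition dbar :: "pdiag \<Rightarrow> pdiag \<Rightarrow> real" where
  "dbar A B = Inf ((\<lambda>c. bottleneck (scale_pd c A) B) ` {0..})"

definition pers_pd :: "pdiag \<Rightarrow> real" where
  "pers_pd A = Max (insert 0 (pers ` set_mset A))"

definition bd_pd :: "pdiag \<Rightarrow> real" where
  "bd_pd A = Max (insert 0 (snd ` set_mset A))"

end

theory Submission
  imports Defs
begin

text \<open>Write \<open>f c = d\<^sub>\<infinity>(cA, B)\<close>. Moving every point of a diagram by at most \<open>e\<close> changes its
  bottleneck distance to \<open>B\<close> by at most \<open>e\<close>, and scaling by \<open>c\<close> instead of \<open>c'\<close> moves each point
  of \<open>A\<close> by at most \<open>|c - c'| bd(A)\<close>; so \<open>f\<close> is \<open>bd(A)\<close>-Lipschitz. Since \<open>pers\<close> is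
  1-Lipschitz for \<open>d\<^sub>\<infinity>\<close>, \<open>|c pers(A) - pers(B)| \<le> f c\<close>, hence every \<open>c\<close> with
  \<open>f c \<le> d\<^sub>0 = min (f 1) (f 0)\<close> lies in \<open>[c\<^sub>m\<^sub>i\<^sub>n, c\<^sub>m\<^sub>a\<^sub>x]\<close>, an interval of length at most
  \<open>2 d\<^sub>0 / pers(A)\<close>. The infimum of \<open>f\<close> is therefore approached inside this interval, where the
  grid of mesh \<open>(c\<^sub>m\<^sub>a\<^sub>x - c\<^sub>m\<^sub>i\<^sub>n)/N\<close> loses at most \<open>bd(A)\<close> times the mesh.\<close>

lemma match_cost_ge:
  assumes "x \<in> {0} \<union> (\<lambda>(a,b). linf a b) ` set_mset M
      \<union> pers ` set_mset (A - image_mset fst M) \<union> pers ` set_mset (B - image_mset snd M)"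
  shows "x \<le> match_cost A B M"
  unfolding match_cost_def using assms by (intro Max_ge) auto

lemma match_cost_nonneg: "0 \<le> match_cost A B M"
  by (rule match_cost_ge) auto

lemma match_cost_le:
  assumes "0 \<le> r" "\<And>a b. (a,b) \<in># M \<Longrightarrow> linf a b \<le> r"
    "\<And>a. a \<in># A - image_mset fst M \<Longrightarrow> pers a \<le> r"
    "\<And>b. b \<in># B - image_mset snd M \<Longrightarrow> pers b \<le> r"
  shows "match_cost A B M \<le> r"
  unfolding match_cost_def using assms by (subst Max_le_iff) auto

lemma bottleneck_le_match_cost: "is_matching A B M \<Longrightarrow> bottleneck A B \<le> match_cost A B M"
  unfolding bottleneck_def
  by (rule cInf_lower) (auto intro!: bdd_belowI[where m=0] match_cost_nonneg)

lemma bottleneck_greatest: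
  "(\<And>M. is_matching A B M \<Longrightarrow> r \<le> match_cost A B M) \<Longrightarrow> r \<le> bottleneck A B"
  unfolding bottleneck_def
  by (rule cInf_greatest) (auto simp: is_matching_def intro: exI[of _ "{#}"])

lemma bottleneck_nonneg: "0 \<le> bottleneck A B"
  by (rule bottleneck_greatest) (rule match_cost_nonneg)

lemma linf_commute: "linf a b = linf b a"
  unfolding linf_def by (simp add: abs_minus_commute)

lemma linf_triangle: "linf a c \<le> linf a b + linf b c"
  unfolding linf_def by (simp add: abs_if max_def)

lemma pers_le_pers_add_linf: "pers a \<le> pers b + linf a b"
  unfolding pers_def linf_def by (simp add: abs_if max_def field_simps)

lemma match_cost_swap: "match_cost B A (image_mset prod.swap M) = match_cost A B M"
proof -
  have "(\<lambda>(a,b). linf a b) ` set_mset (image_mset prod.swap M) = (\<lambda>(a,b). linf a b) ` set_mset M"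
    by (force simp: linf_commute)
  then show ?thesis
    unfolding match_cost_def by (simp add: multiset.map_comp comp_def Un_ac)
qed

lemma bottleneck_commute: "bottleneck B A = bottleneck A B"
proof -
  have "{M. is_matching B A M} = image_mset prod.swap ` {M. is_matching A B M}"
    by (auto simp: is_matching_def multiset.map_comp comp_def
        intro!: image_eqI[where x="image_mset prod.swap M" for M])
  then show ?thesis
    unfolding bottleneck_def by (simp add: image_image match_cost_swap)
qed

lemma pers_pd_ge: "x \<in># X \<Longrightarrow> pers x \<le> pers_pd X"
  unfolding pers_pd_def by (intro Max_ge) auto

lemma pers_pd_nonneg: "0 \<le> pers_pd X"
  unfolding pers_pd_def by (intro Max_ge) auto

lemma pers_pd_least: "0 \<le> r \<Longrightarrow> (\<And>x. x \<in># X \<Longrightarrow> pers x \<le> r) \<Longrightarrow> pers_pd X \<le> r"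
  unfolding pers_pd_def by (subst Max_le_iff) auto

lemma pers_pd_le_add_bottleneck: "pers_pd X \<le> pers_pd B + bottleneck X B"
proof -
  have "pers_pd X - pers_pd B \<le> bottleneck X B"
  proof (rule bottleneck_greatest)
    fix M assume M: "is_matching X B M"
    have "pers_pd X \<le> pers_pd B + match_cost X B M"
    proof (rule pers_pd_least)
      show "0 \<le> pers_pd B + match_cost X B M"
        using pers_pd_nonneg match_cost_nonneg by (simp add: add_nonneg_nonneg)
      fix x assume x: "x \<in># X"
      show "pers x \<le> pers_pd B + match_cost X B M"
      proof (cases "x \<in># image_mset fst M")
        case False
        with x have "x \<in># X - image_mset fst M"
          by (metis count_diff count_greater_zero_iff diff_zero not_gr_zero)
        then have "pers x \<le> match_cost X B M" by (intro match_cost_ge) auto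
        then show ?thesis using pers_pd_nonneg[of B] by linarith
      next
        case True
        then obtain b where xb: "(x,b) \<in># M" by force
        then have "b \<in># B" using M unfolding is_matching_def by (force dest: mset_subset_eqD)
        moreover have "linf x b \<le> match_cost X B M" using xb by (intro match_cost_ge) force
        ultimately show ?thesis using pers_le_pers_add_linf[of x b] pers_pd_ge[of b B] by linarith
      qed
    qed
    then show "pers_pd X - pers_pd B \<le> match_cost X B M" by simp
  qed
  then show ?thesis by simp
qed

lemma abs_pers_pd_diff_le_bottleneck: "\<bar>pers_pd X - pers_pd B\<bar> \<le> bottleneck X B"
  using pers_pd_le_add_bottleneck[of X B] pers_pd_le_add_bottleneck[of B X]
  by (simp add: bottleneck_commute)

lemma bottleneck_empty: "bottleneck {#} B = pers_pd B"
proof -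
  have "{M. is_matching {#} B M} = {{#}}"
    by (auto simp: is_matching_def)
  moreover have "match_cost {#} B {#} = pers_pd B"
    unfolding match_cost_def pers_pd_def by (simp add: insert_commute)
  ultimately show ?thesis unfolding bottleneck_def by simp
qed

lemma bottleneck_le_pers_pd_add: "bottleneck X B \<le> pers_pd X + pers_pd B"
proof -
  have "match_cost X B {#} \<le> pers_pd X + pers_pd B"
    using pers_pd_nonneg[of X] pers_pd_nonneg[of B]
    by (intro match_cost_le) (auto dest!: pers_pd_ge)
  then show ?thesis
    using bottleneck_le_match_cost[of X B "{#}"] by (simp add: is_matching_def)
qed

lemma bottleneck_image_mset_le:
  assumes g: "\<And>x. x \<in># X \<Longrightarrow> linf (g x) x \<le> e" and e: "0 \<le> e"
  shows "bottleneck (image_mset g X) B \<le> bottleneck X B + e"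
proof -
  have "bottleneck (image_mset g X) B - e \<le> bottleneck X B"
  proof (rule bottleneck_greatest)
    fix M assume M: "is_matching X B M"
    define M' where "M' = image_mset (\<lambda>(a,b). (g a, b)) M"
    have fst_M': "image_mset fst M' = image_mset g (image_mset fst M)"
      and snd_M': "image_mset snd M' = image_mset snd M"
      unfolding M'_def by (simp_all add: multiset.map_comp comp_def case_prod_beta)
    have sub: "image_mset fst M \<subseteq># X" using M by (simp add: is_matching_def)
    have M': "is_matching (image_mset g X) B M'"
      using M unfolding is_matching_def fst_M' snd_M' by (auto intro: image_mset_subseteq_mono)
    have "match_cost (image_mset g X) B M' \<le> match_cost X B M + e"
    proof (rule match_cost_le)
      show "0 \<le> match_cost X B M + e" using match_cost_nonneg e by (simp add: add_nonneg_nonneg)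
    next
      fix a' b assume "(a', b) \<in># M'"
      then obtain a where ab: "(a,b) \<in># M" and a': "a' = g a" unfolding M'_def by auto
      then have "a \<in># X" using sub by (force dest: mset_subset_eqD)
      moreover have "linf a b \<le> match_cost X B M" using ab by (intro match_cost_ge) force
      ultimately show "linf a' b \<le> match_cost X B M + e"
        using g linf_triangle[of "g a" b a] unfolding a' by fastforce
    next
      fix a' assume "a' \<in># image_mset g X - image_mset fst M'"
      then have "a' \<in># image_mset g (X - image_mset fst M)"
        unfolding fst_M' image_mset_Diff[OF sub] .
      then obtain a where a: "a \<in># X - image_mset fst M" and a': "a' = g a" by auto
      then have "linf (g a) a \<le> e" using g in_diffD by metis
      moreover have "pers a \<le> match_cost X B M" using a by (intro match_cost_ge) force
      ultimately show "pers a' \<le> match_cost X B M + e"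
        using pers_le_pers_add_linf[of "g a" a] unfolding a' by linarith
    next
      fix b assume "b \<in># B - image_mset snd M'"
      then have "pers b \<le> match_cost X B M" unfolding snd_M' by (intro match_cost_ge) force
      then show "pers b \<le> match_cost X B M + e" using e by linarith
    qed
    then show "bottleneck (image_mset g X) B - e \<le> match_cost X B M"
      using bottleneck_le_match_cost[OF M'] by linarith
  qed
  then show ?thesis by linarith
qed

lemma bd_pd_ge: "a \<in># A \<Longrightarrow> snd a \<le> bd_pd A"
  unfolding bd_pd_def by (intro Max_ge) auto

lemma bd_pd_nonneg: "0 \<le> bd_pd A"
  unfolding bd_pd_def by (intro Max_ge) auto

lemma pers_pd_le_bd_pd: "is_pd A \<Longrightarrow> pers_pd A \<le> bd_pd A"
  by (rule pers_pd_least[OF bd_pd_nonneg])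
    (force simp: is_pd_def pers_def dest: bd_pd_ge)

lemma pers_pd_pos: "is_pd A \<Longrightarrow> A \<noteq> {#} \<Longrightarrow> 0 < pers_pd A"
  by (force simp: is_pd_def pers_def dest: pers_pd_ge)

lemma scale_pd_one: "scale_pd 1 A = A"
  unfolding scale_pd_def by (simp add: case_prod_beta)

lemma pers_pd_scale_pd:
  assumes "0 \<le> c" shows "pers_pd (scale_pd c A) = c * pers_pd A"
proof (cases "c = 0")
  case True then show ?thesis by (simp add: scale_pd_def pers_pd_def)
next
  case False
  have "insert 0 (pers ` set_mset (scale_pd c A)) = (*) c ` insert 0 (pers ` set_mset A)"
    using False by (auto simp: scale_pd_def pers_def case_prod_beta image_image field_simps)
  then show ?thesis
    unfolding pers_pd_def using assms
    by (simp add: mono_Max_commute monoI mult_left_mono)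
qed

lemma abs_scale_pers_pd_diff_le_bottleneck:
  "0 \<le> c \<Longrightarrow> \<bar>c * pers_pd A - pers_pd B\<bar> \<le> bottleneck (scale_pd c A) B"
  using abs_pers_pd_diff_le_bottleneck[of "scale_pd c A" B] by (simp add: pers_pd_scale_pd)

lemma scale_pd_pos: "0 < c \<Longrightarrow> scale_pd c A = image_mset (\<lambda>a. (c * fst a, c * snd a)) A"
  unfolding scale_pd_def by (auto intro!: image_mset_cong)

lemma linf_scale_le_bd_pd:
  assumes "is_pd A" "a \<in># A"
  shows "linf (c * fst a, c * snd a) (c' * fst a, c' * snd a) \<le> \<bar>c - c'\<bar> * bd_pd A"
proof -
  have "0 \<le> fst a" "fst a \<le> bd_pd A" "0 \<le> snd a" "snd a \<le> bd_pd A"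
    using assms bd_pd_ge[OF assms(2)] by (auto simp: is_pd_def)
  then show ?thesis
    unfolding linf_def
    by (simp add: left_diff_distrib[symmetric] abs_mult mult_left_mono)
qed

lemma bottleneck_scale_pd_lipschitz:
  assumes A: "is_pd A" and "0 \<le> c" "0 \<le> c'"
  shows "bottleneck (scale_pd c A) B \<le> bottleneck (scale_pd c' A) B + \<bar>c - c'\<bar> * bd_pd A"
proof -
  have pers_le: "x * pers_pd A \<le> \<bar>x\<bar> * bd_pd A" for x
    using pers_pd_le_bd_pd[OF A] pers_pd_nonneg[of A]
    by (metis abs_ge_self abs_mult abs_of_nonneg mult_mono' order_trans abs_ge_zero)
  consider "c = 0" | "c' = 0" | "0 < c" "0 < c'" using assms by linarith
  then show ?thesis
  proof cases
    case 1
    then show ?thesis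
      using pers_pd_le_add_bottleneck[of B "scale_pd c' A"] pers_pd_scale_pd[OF \<open>0 \<le> c'\<close>]
        pers_le[of c'] bottleneck_commute[of B "scale_pd c' A"]
      by (simp add: scale_pd_def[of 0] bottleneck_empty)
  next
    case 2
    then show ?thesis
      using bottleneck_le_pers_pd_add[of "scale_pd c A" B] pers_pd_scale_pd[OF \<open>0 \<le> c\<close>]
        pers_le[of c]
      by (simp add: scale_pd_def[of 0] bottleneck_empty)
  next
    case 3
    let ?g = "\<lambda>x. (c / c' * fst x, c / c' * snd x)"
    have "scale_pd c A = image_mset ?g (scale_pd c' A)"
      using 3 by (simp add: scale_pd_pos multiset.map_comp comp_def)
    moreover have "linf (?g x) x \<le> \<bar>c - c'\<bar> * bd_pd A" if "x \<in># scale_pd c' A" for x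
      using that 3 linf_scale_le_bd_pd[OF A] by (auto simp: scale_pd_pos)
    ultimately show ?thesis
      by (simp add: bottleneck_image_mset_le bd_pd_nonneg)
  qed
qed

lemma grid_point_near:
  fixes a b c :: real and N :: nat
  assumes "N \<ge> 1" "a \<le> c" "c \<le> b"
  shows "\<exists>i\<in>{0..N}. \<bar>a + real i / real N * (b - a) - c\<bar> \<le> (b - a) / real N"
proof (cases "a = b")
  case True then show ?thesis using assms by (intro bexI[of _ 0]) auto
next
  case False
  then have ba: "0 < b - a" using assms by simp
  define s where "s = (c - a) / (b - a) * real N"
  define i where "i = nat \<lfloor>s\<rfloor>"
  have N: "real N \<ge> 1" using assms by simp
  have s: "0 \<le> s" "s \<le> real N" using assms ba unfolding s_def by (auto simp: field_simps)
  have i: "real i \<le> s" "s < real i + 1" "i \<le> N" unfolding i_def using s by linarith+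
  have "a + real i / real N * (b - a) - c = (real i - s) * ((b - a) / real N)"
    unfolding s_def using N ba by (simp add: field_simps)
  also have "\<bar>\<dots>\<bar> = \<bar>real i - s\<bar> * ((b - a) / real N)"
    using ba by (simp add: abs_mult)
  also have "\<dots> \<le> 1 * ((b - a) / real N)"
    using i ba N by (intro mult_right_mono) auto
  finally show ?thesis using i by (intro bexI[of _ i]) auto
qed

lemma grid_Min_approximates_Inf:
  fixes f :: "real \<Rightarrow> real" and N :: nat and a b d L x :: real
  assumes "N \<ge> 1" "0 \<le> a" "0 \<le> L"
    and nonneg: "\<And>c. 0 \<le> c \<Longrightarrow> 0 \<le> f c"
    and lipschitz: "\<And>c c'. 0 \<le> c \<Longrightarrow> 0 \<le> c' \<Longrightarrow> f c \<le> f c' + \<bar>c - c'\<bar> * L"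
    and localised: "\<And>c. 0 \<le> c \<Longrightarrow> f c \<le> d \<Longrightarrow> a \<le> c \<and> c \<le> b"
    and "0 \<le> x" "f x \<le> d"
  shows "0 \<le> Min ((\<lambda>i. f (a + real i / real N * (b - a))) ` {0..N}) - Inf (f ` {0..}) \<and>
         Min ((\<lambda>i. f (a + real i / real N * (b - a))) ` {0..N}) - Inf (f ` {0..})
           \<le> L * (b - a) / real N"
proof -
  define t where "t i = a + real i / real N * (b - a)" for i
  define m where "m = Min ((\<lambda>i. f (t i)) ` {0..N})"
  have ab: "a \<le> b" using localised \<open>0 \<le> x\<close> \<open>f x \<le> d\<close> by fastforce
  have t_nonneg: "0 \<le> t i" for i
    unfolding t_def using \<open>0 \<le> a\<close> ab by simp
  have m_near: "m \<le> f c + L * (b - a) / real N" if c: "a \<le> c" "c \<le> b" for c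
  proof -
    obtain i where i: "i \<in> {0..N}" "\<bar>t i - c\<bar> \<le> (b - a) / real N"
      using grid_point_near[OF \<open>N \<ge> 1\<close> c] unfolding t_def by blast
    have "m \<le> f (t i)" unfolding m_def using i(1) by (intro Min_le) auto
    also have "\<dots> \<le> f c + \<bar>t i - c\<bar> * L"
      using lipschitz t_nonneg \<open>0 \<le> a\<close> c by fastforce
    also have "\<dots> \<le> f c + (b - a) / real N * L"
      using mult_right_mono[OF i(2) \<open>0 \<le> L\<close>] by simp
    finally show ?thesis by (simp add: mult.commute)
  qed
  have "m - L * (b - a) / real N \<le> f c" if "0 \<le> c" for c
  proof (cases "f c \<le> d")
    case True then show ?thesis using m_near localised that by fastforce
  next
    case False then show ?thesis
      using m_near[of x] localised \<open>0 \<le> x\<close> \<open>f x \<le> d\<close> by fastforce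
  qed
  then have lower: "m - L * (b - a) / real N \<le> Inf (f ` {0..})"
    by (intro cInf_greatest) auto
  have "m \<in> (\<lambda>i. f (t i)) ` {0..N}" unfolding m_def by (intro Min_in) auto
  then have upper: "Inf (f ` {0..}) \<le> m"
    using t_nonneg nonneg by (auto intro!: cInf_lower bdd_belowI[where m=0])
  from lower upper show ?thesis unfolding m_def t_def by simp
qed

theorem mainTheorem5:
  fixes A B :: pdiag and N :: nat
  assumes "is_pd A" and "is_pd B" and "A \<noteq> {#}" and "N \<ge> 1"
  defines "d0 \<equiv> min (bottleneck A B) (bottleneck {#} B)"
  defines "cmin \<equiv> max 0 ((pers_pd B - d0) / pers_pd A)"
  defines "cmax \<equiv> (pers_pd B + d0) / pers_pd A"
  defines "t \<equiv> (\<lambda>i::nat. cmin + real i / real N * (cmax - cmin))"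
  defines "dhat \<equiv> Min ((\<lambda>i. bottleneck (scale_pd (t i) A) B) ` {0..N})"
  shows "0 \<le> dhat - dbar A B \<and>
         dhat - dbar A B \<le> 2 * d0 * bd_pd A / (real N * pers_pd A)"
proof -
  define f where "f c = bottleneck (scale_pd c A) B" for c
  have pA: "0 < pers_pd A" by (rule pers_pd_pos[OF assms(1,3)])
  have "f 1 \<le> d0 \<or> f 0 \<le> d0"
    unfolding d0_def f_def by (simp add: scale_pd_one scale_pd_def[of 0] bottleneck_empty min_def)
  then obtain c\<^sub>0 where c\<^sub>0: "0 \<le> c\<^sub>0" "f c\<^sub>0 \<le> d0"
    using zero_le_one order_refl by blast
  have localised: "cmin \<le> c \<and> c \<le> cmax" if "0 \<le> c" "f c \<le> d0" for c
    using abs_scale_pers_pd_diff_le_bottleneck[of c A B] pA that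
    unfolding cmin_def cmax_def f_def by (auto simp: field_simps)
  have "cmax - (pers_pd B - d0) / pers_pd A = 2 * d0 / pers_pd A"
    unfolding cmax_def using pA by (simp add: field_simps)
  then have width: "cmax - cmin \<le> 2 * d0 / pers_pd A"
    unfolding cmin_def by linarith
  have "0 \<le> dhat - dbar A B \<and> dhat - dbar A B \<le> bd_pd A * (cmax - cmin) / real N"
    unfolding dhat_def t_def dbar_def f_def[symmetric]
  proof (rule grid_Min_approximates_Inf[where a=cmin and b=cmax and d=d0 and x=c\<^sub>0])
    show "0 \<le> cmin" unfolding cmin_def by simp
    show "0 \<le> f c" for c unfolding f_def by (rule bottleneck_nonneg)
    show "f c \<le> f c' + \<bar>c - c'\<bar> * bd_pd A" if "0 \<le> c" "0 \<le> c'" for c c'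
      unfolding f_def using \<open>is_pd A\<close> that by (rule bottleneck_scale_pd_lipschitz)
  qed (use \<open>N \<ge> 1\<close> bd_pd_nonneg localised c\<^sub>0 in auto)
  moreover have "bd_pd A * (cmax - cmin) / real N \<le> 2 * d0 * bd_pd A / (real N * pers_pd A)"
    using divide_right_mono[OF mult_left_mono[OF width bd_pd_nonneg[of A]], of "real N"]
    by (simp add: ac_simps)
  ultimately show ?thesis by linarith
qed

end
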